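(* Let $T$ be a linear operator in $H$ with $W(T)=\mathbb C$. (i) Let $x,y\in\operatorname{dom}(T)$, $\|x\|=\|y\|=1$, be linearly independent. Then, for all but at most three $t\in\mathbb C$, \[ W\big(T|_{(y+tx)^\perp\cap\operatorname{dom}(T)}\big)=\mathbb C. \] (ii) Let $y\in\operatorname{dom}(T)$, $\|y\|=1$, be such that $\{y\}^\perp\cap\operatorname{dom}(T)\neq\{0\}$. Then for every $\varepsilon>0$ there exists $w_\varepsilon\in\operatorname{dom}(T)$ with $\|w_\varepsilon\|=1$, \[ W\big(T|_{\{w_\varepsilon\}^\perp\cap\operatorname{dom}(T)}\big)=\mathbb C\quad\text{and}\quad|\langle Tw_\varepsilon,w_\varepsilon\rangle-\langle Ty,y\rangle|<\varepsilon. \]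
   Context: $H$ is a separable infinite-dimensional complex Hilbert space; $T$ need not be closed, closable or densely defined. $W(T)=\{\langle Tx,x\rangle:x\in\operatorname{dom}(T),\|x\|=1\}$; for a subspace $M\subset\operatorname{dom}(T)$, $T|_M$ is the restriction of $T$ to $M$, so $W(T|_M)=\{\langle Tx,x\rangle:x\in M,\|x\|=1\}$. *)

theory Defs
  imports "HOL-Analysis.Analysis"
begin

class complex_inner = real_normed_vector +
  fixes scaleC :: "complex \<Rightarrow> 'a \<Rightarrow> 'a"
    and cinner :: "'a \<Rightarrow> 'a \<Rightarrow> complex"
  assumes scaleC_of_real: "scaleC (complex_of_real r) x = scaleR r x"
    and scaleC_add_right: "scaleC a (x + y) = scaleC a x + scaleC a y"
    and scaleC_add_left: "scaleC (a + b) x = scaleC a x + scaleC b x"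
    and scaleC_scaleC: "scaleC a (scaleC b x) = scaleC (a * b) x"
    and scaleC_one: "scaleC 1 x = x"
    and cinner_commute: "cinner x y = cnj (cinner y x)"
    and cinner_add_left: "cinner (x + y) z = cinner x z + cinner y z"
    and cinner_scaleC_left: "cinner (scaleC a x) y = a * cinner x y"
    and cinner_ge_zero: "0 \<le> Re (cinner x x)"
    and cinner_eq_zero_iff: "cinner x x = 0 \<longleftrightarrow> x = 0"
    and norm_eq_sqrt_cinner: "norm x = sqrt (Re (cinner x x))"

class chilbert_space = complex_inner + complete_space

definition separable_space :: "'a::topological_space itself \<Rightarrow> bool" where
  "separable_space _ \<longleftrightarrow> (\<exists>D::'a set. countable D \<and> closure D = UNIV)"

definition cspan :: "'a::complex_inner set \<Rightarrow> 'a set" where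
  "cspan F = {\<Sum>v\<in>S. scaleC (c v) v | S c. finite S \<and> S \<subseteq> F}"

definition infinite_dimensional :: "'a::complex_inner itself \<Rightarrow> bool" where
  "infinite_dimensional _ \<longleftrightarrow> \<not> (\<exists>F::'a set. finite F \<and> cspan F = UNIV)"

text \<open>A linear operator is given by its domain \<open>D\<close> (a complex linear subspace)
and a map \<open>T\<close> that is complex linear on \<open>D\<close>; values outside \<open>D\<close> are irrelevant.\<close>

definition csubspace :: "'a::complex_inner set \<Rightarrow> bool" where
  "csubspace D \<longleftrightarrow> 0 \<in> D \<and> (\<forall>x\<in>D. \<forall>y\<in>D. x + y \<in> D) \<and> (\<forall>a. \<forall>x\<in>D. scaleC a x \<in> D)"

definition linear_operator :: "'a::complex_inner set \<Rightarrow> ('a \<Rightarrow> 'a) \<Rightarrow> bool" where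
  "linear_operator D T \<longleftrightarrow> csubspace D \<and>
     (\<forall>x\<in>D. \<forall>y\<in>D. T (x + y) = T x + T y) \<and> (\<forall>a. \<forall>x\<in>D. T (scaleC a x) = scaleC a (T x))"

text \<open>Numerical range of \<open>T\<close> restricted to a set \<open>M\<close> (for \<open>M = D\<close> this is \<open>W(T)\<close>).\<close>
definition num_range :: "'a::complex_inner set \<Rightarrow> ('a \<Rightarrow> 'a) \<Rightarrow> complex set" where
  "num_range M T = {cinner (T x) x | x. x \<in> M \<and> norm x = 1}"

definition orth_in :: "'a::complex_inner \<Rightarrow> 'a set \<Rightarrow> 'a set" where
  "orth_in v D = {z \<in> D. cinner z v = 0}"

definition clin_indep2 :: "'a::complex_inner \<Rightarrow> 'a \<Rightarrow> bool" where
  "clin_indep2 x y \<longleftrightarrow> (\<forall>a b. scaleC a x + scaleC b y = 0 \<longrightarrow> a = 0 \<and> b = 0)"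

end

theory Submission
  imports Defs
begin

text \<open>If \<open>W(T|\<^sub>M) \<noteq> \<complex>\<close> for a subspace \<open>M\<close>, then, being convex (Toeplitz--Hausdorff),
  \<open>W(T|\<^sub>M)\<close> lies in a half-plane: \<open>Re (\<omega> \<langle>Tm, m\<rangle>) \<ge> -C \<parallel>m\<parallel>\<^sup>2\<close> on \<open>M\<close> for some
  \<open>|\<omega>| = 1\<close>. Write the complements \<open>(y + t x)\<^sup>\<perp>\<close> as \<open>(e\<^sub>2 + s e\<^sub>1)\<^sup>\<perp>\<close> with \<open>e\<^sub>1, e\<^sub>2\<close>
  orthonormal. If two of them, for \<open>s\<^sub>1 \<noteq> s\<^sub>2\<close>, carried such bounds with
  \<open>\<omega>\<^sub>1 + \<omega>\<^sub>2 \<noteq> 0\<close>, the bounds would combine, through their common part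
  \<open>{e\<^sub>1, e\<^sub>2}\<^sup>\<perp>\<close>, into a bound of the same kind for \<open>\<omega>\<^sub>1 + \<omega>\<^sub>2\<close> on all of \<open>dom T\<close>,
  contradicting \<open>W(T) = \<complex>\<close>. Among three unimodular numbers some pairwise sum is
  nonzero, so in fact at most two parameters \<open>t\<close> are exceptional.
  For (ii), take a unit \<open>x \<perp> y\<close> and normalise \<open>y + t x\<close> for a small real \<open>t\<close> avoiding
  the exceptional values; \<open>\<langle>Tw, w\<rangle>\<close> depends continuously on \<open>t\<close>.\<close>

section \<open>Complex inner product spaces and linear operators\<close>

declare scaleC_one [simp]

lemma scaleC_zero_left [simp]: "scaleC 0 (x::'a::complex_inner) = 0"
  using scaleC_of_real[of 0 x] by simp

lemma scaleC_zero_right [simp]: "scaleC a (0::'a::complex_inner) = 0"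
  using scaleC_add_right[of a 0 0] by simp

lemma scaleC_minus_left: "scaleC (- a) x = - scaleC a (x::'a::complex_inner)"
  by (metis add_eq_0_iff2 add.right_inverse scaleC_add_left scaleC_zero_left)

lemma scaleC_minus_right: "scaleC a (- x) = - scaleC a (x::'a::complex_inner)"
  by (metis add_eq_0_iff2 add.right_inverse scaleC_add_right scaleC_zero_right)

lemma scaleC_diff_right: "scaleC a (x - y) = scaleC a x - scaleC a (y::'a::complex_inner)"
  by (metis diff_conv_add_uminus scaleC_add_right scaleC_minus_right)

lemma cinner_zero_left [simp]: "cinner 0 (x::'a::complex_inner) = 0"
  using cinner_add_left[of 0 0 x] by simp

lemma cinner_zero_right [simp]: "cinner (x::'a::complex_inner) 0 = 0"
  by (metis cinner_commute cinner_zero_left complex_cnj_zero)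

lemma cinner_add_right: "cinner x (y + z) = cinner x y + cinner (x::'a::complex_inner) z"
  by (metis cinner_commute cinner_add_left complex_cnj_add)

lemma cinner_scaleC_right: "cinner x (scaleC a y) = cnj a * cinner (x::'a::complex_inner) y"
  by (metis cinner_commute cinner_scaleC_left complex_cnj_mult)

lemma cinner_minus_left: "cinner (- x) y = - cinner x (y::'a::complex_inner)"
  using cinner_add_left[of "- x" x y] by (simp add: eq_neg_iff_add_eq_0)

lemma cinner_diff_left: "cinner (x - y) z = cinner x z - cinner y (z::'a::complex_inner)"
  by (metis diff_conv_add_uminus cinner_add_left cinner_minus_left)

lemma cinner_diff_right: "cinner x (y - z) = cinner x y - cinner x (z::'a::complex_inner)"
  by (metis cinner_commute cinner_diff_left complex_cnj_diff)

lemmas cinner_simps = cinner_add_left cinner_add_right cinner_diff_left cinner_diff_right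
  cinner_scaleC_left cinner_scaleC_right

lemma cinner_self: "cinner x x = complex_of_real ((norm (x::'a::complex_inner))\<^sup>2)"
proof -
  have "Im (cinner x x) = 0"
    using cinner_commute[of x x] by (metis cnj.sel(2) equal_neg_zero)
  moreover have "(norm x)\<^sup>2 = Re (cinner x x)"
    using norm_eq_sqrt_cinner[of x] cinner_ge_zero[of x] by simp
  ultimately show ?thesis by (simp add: complex_eq_iff)
qed

lemma cinner_self_eq_1_iff: "cinner x x = 1 \<longleftrightarrow> norm (x::'a::complex_inner) = 1"
  by (simp add: cinner_self del: of_real_power) (smt (verit) norm_ge_zero power2_eq_1_iff)

lemma norm_scaleC [simp]: "norm (scaleC a x) = cmod a * norm (x::'a::complex_inner)"
proof -
  have "complex_of_real ((norm (scaleC a x))\<^sup>2) = a * cnj a * cinner x x"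
    by (subst cinner_self[symmetric]) (simp add: cinner_scaleC_left cinner_scaleC_right mult.assoc)
  also have "\<dots> = complex_of_real ((cmod a * norm x)\<^sup>2)"
    by (simp add: cinner_self complex_mult_cnj cmod_power2 power_mult_distrib del: of_real_power)
  finally show ?thesis
    using power2_eq_iff_nonneg[of "norm (scaleC a x)" "cmod a * norm x"] by (simp only: of_real_eq_iff) simp
qed

lemma cinner_Cauchy_Schwarz: "cmod (cinner x y) \<le> norm x * norm (y::'a::complex_inner)"
proof (cases "y = 0")
  case False
  define l where "l = cinner x y / cinner y y"
  have y: "norm y > 0" using False by simp
  have "0 \<le> Re (cinner (x - scaleC l y) (x - scaleC l y))" by (rule cinner_ge_zero)
  also have "cinner (x - scaleC l y) (x - scaleC l y) =
      cinner x x - cnj l * cinner x y - l * cinner y x + l * cnj l * cinner y y"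
    by (simp add: cinner_simps algebra_simps)
  also have "\<dots> = cinner x x - cinner x y * cnj (cinner x y) / cinner y y"
    using y unfolding l_def cinner_self[of y]
    by (subst cinner_commute[of y x]) (simp add: field_simps power2_eq_square)
  finally have "(cmod (cinner x y))\<^sup>2 / (norm y)\<^sup>2 \<le> (norm x)\<^sup>2"
    by (simp add: cinner_self complex_mult_cnj del: of_real_power) (simp add: Re_divide cmod_power2)
  then have "(cmod (cinner x y))\<^sup>2 \<le> (norm x * norm y)\<^sup>2"
    using y by (simp add: field_simps power_mult_distrib)
  then show ?thesis by (simp add: power2_le_iff_abs_le)
qed simp

lemma Re_ge_neg_cmod: "- cmod z \<le> Re z"
  using abs_Re_le_cmod[of z] by linarith

lemma norm_add_orthogonal:
  assumes "cinner x y = (0::complex)"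
  shows "(norm (x + y))\<^sup>2 = (norm x)\<^sup>2 + (norm (y::'a::complex_inner))\<^sup>2"
proof -
  have "cinner y x = 0" using assms cinner_commute[of y x] by simp
  then have "complex_of_real ((norm (x + y))\<^sup>2) = complex_of_real ((norm x)\<^sup>2 + (norm y)\<^sup>2)"
    using assms by (simp add: cinner_self[symmetric] cinner_simps del: of_real_power)
  then show ?thesis by (simp only: of_real_eq_iff)
qed

lemma norm_add_scaleC_orthogonal:
  assumes "cinner n u = 0" "norm u = 1"
  shows "(norm (n + scaleC b u))\<^sup>2 = (norm n)\<^sup>2 + (cmod b)\<^sup>2"
  using assms by (simp add: norm_add_orthogonal cinner_scaleC_right power_mult_distrib)

lemma norm_lincomb_lower_bound:
  assumes "norm u1 = 1" "norm u2 = 1"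
  shows "(1 - cmod (cinner u1 u2)) * ((cmod a)\<^sup>2 + (cmod b)\<^sup>2) \<le> (norm (scaleC a u1 + scaleC b u2))\<^sup>2"
proof -
  define X where "X = a * cnj b * cinner u1 u2"
  have "complex_of_real ((norm (scaleC a u1 + scaleC b u2))\<^sup>2) = a * cnj a + b * cnj b + (X + cnj X)"
    using assms[folded cinner_self_eq_1_iff] cinner_commute[of u2 u1]
    by (subst cinner_self[symmetric]) (simp add: cinner_simps X_def algebra_simps)
  also have "\<dots> = complex_of_real ((cmod a)\<^sup>2 + (cmod b)\<^sup>2 + 2 * Re X)"
    by (simp add: complex_norm_square complex_add_cnj del: of_real_power)
  finally have norm_eq: "(norm (scaleC a u1 + scaleC b u2))\<^sup>2 = (cmod a)\<^sup>2 + (cmod b)\<^sup>2 + 2 * Re X"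
    by (simp only: of_real_eq_iff)
  have "2 * (cmod a * cmod b) * cmod (cinner u1 u2) \<le> ((cmod a)\<^sup>2 + (cmod b)\<^sup>2) * cmod (cinner u1 u2)"
    using sum_squares_bound[of "cmod a" "cmod b"] by (intro mult_right_mono) auto
  moreover have "- cmod X \<le> Re X"
    by (rule Re_ge_neg_cmod)
  ultimately show ?thesis
    unfolding norm_eq by (simp add: X_def norm_mult algebra_simps)
qed

lemma norm_add_lincomb_lower_bound:
  assumes u: "norm u1 = 1" "norm u2 = 1" and n: "cinner n u1 = 0" "cinner n u2 = 0"
  shows "(1 - cmod (cinner u1 u2)) * ((norm n)\<^sup>2 + (cmod a)\<^sup>2 + (cmod b)\<^sup>2)
    \<le> (norm (n + scaleC a u1 + scaleC b u2))\<^sup>2"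
proof -
  have "(norm (n + scaleC a u1 + scaleC b u2))\<^sup>2 = (norm n)\<^sup>2 + (norm (scaleC a u1 + scaleC b u2))\<^sup>2"
    using n by (simp add: add.assoc norm_add_orthogonal cinner_simps)
  moreover have "(1 - cmod (cinner u1 u2)) * (norm n)\<^sup>2 \<le> (norm n)\<^sup>2"
    using mult_nonneg_nonneg[OF norm_ge_zero zero_le_power2, of "cinner u1 u2" "norm n"]
    by (simp add: algebra_simps)
  moreover have "(1 - cmod (cinner u1 u2)) * ((norm n)\<^sup>2 + (cmod a)\<^sup>2 + (cmod b)\<^sup>2) =
      (1 - cmod (cinner u1 u2)) * (norm n)\<^sup>2 + (1 - cmod (cinner u1 u2)) * ((cmod a)\<^sup>2 + (cmod b)\<^sup>2)"
    by (simp add: algebra_simps)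
  ultimately show ?thesis
    using norm_lincomb_lower_bound[OF u, of a b] by linarith
qed

lemma norm_diff_scaleC_orthonormal:
  assumes "norm e1 = 1" "norm e2 = 1" "cinner e1 e2 = 0"
  shows "(norm (e1 - scaleC c e2))\<^sup>2 = 1 + (cmod c)\<^sup>2"
  using norm_add_scaleC_orthogonal[of e1 e2 "- c"] assms by (simp add: scaleC_minus_left)

lemma cmod_one_add_cnj_mult_sq:
  fixes s t :: complex
  shows "(cmod (1 + cnj s * t))\<^sup>2 + (cmod (s - t))\<^sup>2 = (1 + (cmod s)\<^sup>2) * (1 + (cmod t)\<^sup>2)"
  unfolding cmod_power2 by (simp add: power2_eq_square algebra_simps)

lemma cmod_cinner_skew_pair_less:
  assumes e: "norm e1 = 1" "norm e2 = 1" "cinner e1 e2 = 0" and s: "s1 \<noteq> s2"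
  shows "cmod (cinner (e1 - scaleC (cnj s1) e2) (e1 - scaleC (cnj s2) e2))
    < norm (e1 - scaleC (cnj s1) e2) * norm (e1 - scaleC (cnj s2) e2)"
proof -
  have "cinner e1 e1 = 1" "cinner e2 e2 = 1" "cinner e2 e1 = 0"
    using e cinner_commute[of e2 e1] by (simp_all add: cinner_self_eq_1_iff)
  then have "cinner (e1 - scaleC (cnj s1) e2) (e1 - scaleC (cnj s2) e2) = 1 + cnj s1 * s2"
    using e(3) by (simp add: cinner_simps)
  moreover have "0 < (cmod (s1 - s2))\<^sup>2"
    using s by simp
  then have "(cmod (1 + cnj s1 * s2))\<^sup>2 < (1 + (cmod s1)\<^sup>2) * (1 + (cmod s2)\<^sup>2)"
    using cmod_one_add_cnj_mult_sq[of s1 s2] by linarith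
  ultimately have "(cmod (cinner (e1 - scaleC (cnj s1) e2) (e1 - scaleC (cnj s2) e2)))\<^sup>2
      < (norm (e1 - scaleC (cnj s1) e2) * norm (e1 - scaleC (cnj s2) e2))\<^sup>2"
    by (simp add: power_mult_distrib norm_diff_scaleC_orthonormal[OF e])
  then show ?thesis
    by (rule power2_less_imp_less) simp
qed

lemma clin_indep2_orthogonal:
  assumes "cinner x y = 0" "x \<noteq> 0" "y \<noteq> 0"
  shows "clin_indep2 x y"
  unfolding clin_indep2_def
proof (intro allI impI)
  fix a b assume ab: "scaleC a x + scaleC b y = 0"
  have "cinner y x = 0"
    using assms(1) cinner_commute[of y x] by simp
  then have "a * cinner x x = 0" and "b * cinner y y = 0"
    using arg_cong[OF ab, of "\<lambda>z. cinner z x"] arg_cong[OF ab, of "\<lambda>z. cinner z y"] assms(1)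
    by (simp_all add: cinner_add_left cinner_scaleC_left)
  then show "a = 0 \<and> b = 0"
    using assms(2,3) by (simp add: cinner_eq_zero_iff)
qed

lemma csubspace_zero: "csubspace D \<Longrightarrow> 0 \<in> D"
  and csubspace_add: "csubspace D \<Longrightarrow> x \<in> D \<Longrightarrow> y \<in> D \<Longrightarrow> x + y \<in> D"
  and csubspace_scaleC: "csubspace D \<Longrightarrow> x \<in> D \<Longrightarrow> scaleC a x \<in> D"
  unfolding csubspace_def by auto

lemma csubspace_diff: "csubspace D \<Longrightarrow> x \<in> D \<Longrightarrow> y \<in> D \<Longrightarrow> x - y \<in> D"
  using csubspace_add[of D x "scaleC (-1) y"] csubspace_scaleC[of D y "-1"]
  by (simp add: scaleC_minus_left)

lemma orth_in_scaleC: "k \<noteq> 0 \<Longrightarrow> orth_in (scaleC k v) D = orth_in v D"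
  unfolding orth_in_def by (simp add: cinner_scaleC_right)

lemma csubspace_orth_in: "csubspace D \<Longrightarrow> csubspace (orth_in v D)"
  unfolding orth_in_def csubspace_def by (auto simp: cinner_add_left cinner_scaleC_left)

lemma orth_in_subset: "orth_in v D \<subseteq> D"
  unfolding orth_in_def by blast

lemma decompose_orthonormal_skew_pair:
  assumes D: "csubspace D" and z: "z \<in> D"
    and e: "e1 \<in> D" "e2 \<in> D" "norm e1 = 1" "norm e2 = 1" "cinner e1 e2 = 0" and s: "s1 \<noteq> s2"
  obtains n a b where "n \<in> D" "cinner n e1 = 0" "cinner n e2 = 0"
    "z = n + scaleC a (e1 - scaleC (cnj s1) e2) + scaleC b (e1 - scaleC (cnj s2) e2)"
proof -
  define a where "a = cinner z e1"
  define b where "b = cinner z e2"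
  define c where "c = (a * cnj s1 + b) / (cnj s2 - cnj s1)"
  have "cnj s2 - cnj s1 \<noteq> 0"
    using s by simp
  then have c_eq: "c * (cnj s2 - cnj s1) = a * cnj s1 + b"
    by (simp add: c_def)
  have "(a + c) * cnj s1 + (- c) * cnj s2 = a * cnj s1 - c * (cnj s2 - cnj s1)"
    by (simp add: algebra_simps)
  then have "(a + c) * cnj s1 + (- c) * cnj s2 = - b"
    by (simp add: c_eq)
  then have plane: "scaleC (a + c) (e1 - scaleC (cnj s1) e2) + scaleC (- c) (e1 - scaleC (cnj s2) e2)
      = scaleC a e1 + scaleC b e2"
    by (simp add: scaleC_diff_right scaleC_scaleC scaleC_minus_left)
      (simp add: algebra_simps flip: scaleC_add_left)
  define n where "n = z - scaleC a e1 - scaleC b e2"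
  have "cinner e1 e1 = 1" "cinner e2 e2 = 1" "cinner e2 e1 = 0"
    using e cinner_commute[of e2 e1] by (simp_all add: cinner_self_eq_1_iff)
  then have "n \<in> D" "cinner n e1 = 0" "cinner n e2 = 0"
    using z D e by (simp_all add: n_def a_def b_def csubspace_diff csubspace_scaleC cinner_simps)
  moreover have "z = n + scaleC (a + c) (e1 - scaleC (cnj s1) e2) + scaleC (- c) (e1 - scaleC (cnj s2) e2)"
    unfolding add.assoc plane by (simp add: n_def)
  ultimately show thesis
    by (rule that)
qed

lemma orth_in_line_reparametrize:
  assumes D: "csubspace D" and x: "x \<in> D" "norm x = 1" and y: "y \<in> D" and indep: "clin_indep2 x y"
  obtains e s where "e \<in> D" "norm e = 1" "cinner x e = 0" "inj s"
    "\<And>t. orth_in (y + scaleC t x) D = orth_in (e + scaleC (s t) x) D"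
proof -
  define c where "c = cinner y x"
  define d where "d = y - scaleC c x"
  have "d \<noteq> 0"
  proof
    assume "d = 0"
    then have "scaleC (- c) x + scaleC 1 y = 0"
      by (simp add: d_def scaleC_minus_left)
    then show False
      using indep unfolding clin_indep2_def by fastforce
  qed
  define g where "g = norm d"
  have g: "g > 0"
    using \<open>d \<noteq> 0\<close> by (simp add: g_def)
  define e where "e = scaleC (complex_of_real (1 / g)) d"
  have "cinner x d = 0"
    using x(2) cinner_commute[of y x]
    by (simp add: d_def c_def cinner_diff_right cinner_scaleC_right cinner_self_eq_1_iff)
  then have "e \<in> D" "norm e = 1" "cinner x e = 0"
    using D x y g by (simp_all add: e_def d_def g_def csubspace_scaleC csubspace_diff norm_divide cinner_scaleC_right)
  moreover define s where "s t = (c + t) / complex_of_real g" for t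
  have "inj s"
    using g by (auto simp: inj_def s_def)
  moreover have "y + scaleC t x = scaleC (complex_of_real g) (e + scaleC (s t) x)" for t
  proof -
    have "scaleC (complex_of_real g) (e + scaleC (s t) x) = d + scaleC (c + t) x"
      using g by (simp add: e_def s_def scaleC_add_right scaleC_scaleC)
    also have "\<dots> = y + scaleC t x"
      by (simp add: d_def scaleC_add_left algebra_simps)
    finally show ?thesis ..
  qed
  then have "orth_in (y + scaleC t x) D = orth_in (e + scaleC (s t) x) D" for t
    using g by (simp add: orth_in_scaleC)
  ultimately show thesis
    by (rule that)
qed

lemma linear_operator_csubspace: "linear_operator D T \<Longrightarrow> csubspace D"
  and linear_operator_add: "linear_operator D T \<Longrightarrow> x \<in> D \<Longrightarrow> y \<in> D \<Longrightarrow> T (x + y) = T x + T y"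
  and linear_operator_scaleC: "linear_operator D T \<Longrightarrow> x \<in> D \<Longrightarrow> T (scaleC a x) = scaleC a (T x)"
  unfolding linear_operator_def by auto

lemma linear_operator_zero: "linear_operator D T \<Longrightarrow> T 0 = 0"
  using linear_operator_scaleC[of D T 0 0] csubspace_zero linear_operator_csubspace by fastforce

lemma cinner_operator_scaleC:
  assumes "linear_operator D T" "x \<in> D"
  shows "cinner (T (scaleC a x)) (scaleC a x) = a * cnj a * cinner (T x) x"
  using assms by (simp add: linear_operator_scaleC cinner_scaleC_left cinner_scaleC_right)

lemma cinner_operator_lincomb:
  assumes "linear_operator D T" "x \<in> D" "y \<in> D"
  shows "cinner (T (scaleC a x + scaleC b y)) (scaleC a x + scaleC b y) =
    a * cnj a * cinner (T x) x + a * cnj b * cinner (T x) y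
    + b * cnj a * cinner (T y) x + b * cnj b * cinner (T y) y"
  using assms linear_operator_csubspace[OF assms(1)]
  by (simp add: linear_operator_add linear_operator_scaleC csubspace_scaleC cinner_simps algebra_simps)

lemma cinner_operator_three_term:
  assumes T: "linear_operator D T" and "n \<in> D" "x \<in> D" "y \<in> D"
  shows "cinner (T (n + x + y)) (n + x + y) =
    (cinner (T (n + scaleC 2 x)) (n + scaleC 2 x) + cinner (T (n + scaleC 2 y)) (n + scaleC 2 y)) / 2
    + cinner (T (x + y)) (x + y) - 2 * cinner (T x) x - 2 * cinner (T y) y"
  using assms linear_operator_csubspace[OF T]
  by (simp add: linear_operator_add linear_operator_scaleC csubspace_add csubspace_scaleC cinner_simps
      field_simps)

lemma cmod_cinner_operator_lincomb_le:
  assumes T: "linear_operator D T" and "x \<in> D" "y \<in> D"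
  shows "cmod (cinner (T (scaleC a x + scaleC b y)) (scaleC a x + scaleC b y)) \<le>
    ((cmod a)\<^sup>2 + (cmod b)\<^sup>2) *
    (cmod (cinner (T x) x) + cmod (cinner (T x) y) + cmod (cinner (T y) x) + cmod (cinner (T y) y))"
proof -
  let ?A = "(cmod a)\<^sup>2 + (cmod b)\<^sup>2"
  have "0 \<le> cmod a * cmod b"
    by simp
  then have "cmod a * cmod b \<le> ?A"
    using sum_squares_bound[of "cmod a" "cmod b"] by linarith
  then have coeff: "cmod (c * cnj d) \<le> ?A" if "c \<in> {a, b}" "d \<in> {a, b}" for c d
    using that by (auto simp: norm_mult power2_eq_square mult.commute)
  have bound_term: "cmod (c * cnj d * q) \<le> ?A * cmod q" if "c \<in> {a, b}" "d \<in> {a, b}" for c d q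
    unfolding norm_mult[of _ q] using coeff[OF that] by (rule mult_right_mono) simp
  have triangle: "cmod (w1 + w2 + w3 + w4) \<le> cmod w1 + cmod w2 + cmod w3 + cmod w4" for w1 w2 w3 w4
    using norm_triangle_ineq[of "w1 + w2 + w3" w4] norm_triangle_ineq[of "w1 + w2" w3]
      norm_triangle_ineq[of w1 w2] by linarith
  show ?thesis
    unfolding cinner_operator_lincomb[OF assms] distrib_left
    using triangle bound_term[of a a "cinner (T x) x"] bound_term[of a b "cinner (T x) y"]
      bound_term[of b a "cinner (T y) x"] bound_term[of b b "cinner (T y) y"]
    by (smt (verit) insertCI)
qed

lemma normalize_in_domain:
  assumes T: "linear_operator D T" and v: "v \<in> D" "v \<noteq> 0"
  defines "w \<equiv> scaleC (complex_of_real (1 / norm v)) v"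
  shows "w \<in> D" "norm w = 1" "orth_in w D = orth_in v D"
    "cinner (T w) w = cinner (T v) v / complex_of_real ((norm v)\<^sup>2)"
  using v linear_operator_csubspace[OF T]
  by (simp_all add: w_def csubspace_scaleC norm_divide orth_in_scaleC cinner_operator_scaleC[OF T]
      power2_eq_square)

section \<open>Convexity of the numerical range\<close>

lemma linear_operator_affine:
  assumes "linear_operator D T"
  shows "linear_operator D (\<lambda>x. scaleC a (T x) + scaleC b x)"
  using assms unfolding linear_operator_def
  by (simp add: scaleC_add_right scaleC_scaleC mult.commute)

lemma num_range_affine:
  "num_range M (\<lambda>x. scaleC a (T x) + scaleC b x) = (\<lambda>w. a * w + b) ` num_range M T"
proof -
  have eq: "cinner (scaleC a (T x) + scaleC b x) x = a * cinner (T x) x + b" if "norm x = 1" for x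
    using that by (simp add: cinner_add_left cinner_scaleC_left cinner_self_eq_1_iff)
  show ?thesis
    unfolding num_range_def by (auto simp: image_iff eq) (metis eq)
qed

lemma exists_unimodular_Im_eq_0:
  fixes X Y :: complex
  shows "\<exists>\<mu>. cmod \<mu> = 1 \<and> Im (cnj \<mu> * X + \<mu> * Y) = 0"
proof -
  have Im_eq: "Im (cnj \<mu> * X + \<mu> * Y) = Im (cnj \<mu> * (X - cnj Y))" for \<mu>
    by (simp add: algebra_simps)
  have Im_sgn: "Im (cnj (sgn d) * d) = 0" for d :: complex
    by (simp add: sgn_div_norm mult.commute[of "cnj d"])
  show ?thesis
  proof (cases "X = cnj Y")
    case True
    then show ?thesis by (intro exI[of _ 1]) (simp add: Im_eq)
  next
    case False
    then show ?thesis
      unfolding Im_eq using Im_sgn[of "X - cnj Y"]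
      by (intro exI[of _ "sgn (X - cnj Y)"] conjI) (simp_all add: norm_sgn)
  qed
qed

text \<open>Toeplitz--Hausdorff in the normalised situation: along the real path
  \<open>r \<mapsto> (1 - r) z\<^sub>1 + r \<mu> z\<^sub>2\<close>, with \<open>\<mu>\<close> chosen to make the cross terms real,
  the quadratic form is real-valued, so the intermediate value theorem applies.\<close>

lemma of_real_unit_interval_in_num_range:
  assumes T: "linear_operator D T" and M: "csubspace M" "M \<subseteq> D"
    and z1: "z1 \<in> M" "norm z1 = 1" "cinner (T z1) z1 = 0"
    and z2: "z2 \<in> M" "norm z2 = 1" "cinner (T z2) z2 = 1"
    and v: "0 \<le> v" "v \<le> 1"
  shows "complex_of_real v \<in> num_range M T"
proof -
  obtain \<mu> where \<mu>: "cmod \<mu> = 1" "Im (cnj \<mu> * cinner (T z1) z2 + \<mu> * cinner (T z2) z1) = 0"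
    using exists_unimodular_Im_eq_0 by blast
  define c where "c = Re (cnj \<mu> * cinner (T z1) z2 + \<mu> * cinner (T z2) z1)"
  have z1D: "z1 \<in> D" and z2D: "z2 \<in> D"
    using z1 z2 M by auto
  have \<mu>_cnj: "\<mu> * cnj \<mu> = 1"
    using \<mu>(1) by (simp add: complex_norm_square[symmetric])
  define z where "z r = (1 - r) *\<^sub>R z1 + r *\<^sub>R scaleC \<mu> z2" for r
  have z_scaleC: "z r = scaleC (complex_of_real (1 - r)) z1 + scaleC (complex_of_real r * \<mu>) z2" for r
    unfolding z_def by (simp add: scaleC_of_real[symmetric] scaleC_scaleC)
  have z_in: "z r \<in> M" for r
    unfolding z_scaleC using M z1 z2 by (simp add: csubspace_add csubspace_scaleC)
  have q_z: "cinner (T (z r)) (z r) = complex_of_real ((1 - r) * r * c + r\<^sup>2)" for r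
  proof -
    have "cinner (T (z r)) (z r) =
        (1 - r) * r * (cnj \<mu> * cinner (T z1) z2 + \<mu> * cinner (T z2) z1) + r\<^sup>2 * (\<mu> * cnj \<mu>)"
      unfolding z_scaleC using z1 z2 M
      by (subst cinner_operator_lincomb[OF T]) (auto simp: algebra_simps power2_eq_square)
    also have "cnj \<mu> * cinner (T z1) z2 + \<mu> * cinner (T z2) z1 = complex_of_real c"
      using \<mu>(2) by (simp add: c_def complex_eq_iff)
    finally show ?thesis by (simp add: \<mu>_cnj)
  qed
  have z_nonzero: "z r \<noteq> 0" for r
  proof
    assume "z r = 0"
    then have "scaleC (complex_of_real r * \<mu>) z2 = - scaleC (complex_of_real (1 - r)) z1"
      unfolding z_scaleC by (simp add: eq_neg_iff_add_eq_0 add.commute)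
    then have "scaleC (complex_of_real r * \<mu>) z2 = scaleC (- complex_of_real (1 - r)) z1"
      by (simp only: scaleC_minus_left)
    then have "cinner (T (scaleC (complex_of_real r * \<mu>) z2)) (scaleC (complex_of_real r * \<mu>) z2) =
        cinner (T (scaleC (- complex_of_real (1 - r)) z1)) (scaleC (- complex_of_real (1 - r)) z1)"
      by (rule arg_cong)
    then have "r = 0"
      using z1 z2 \<mu>(1) by (auto simp: cinner_operator_scaleC[OF T z1D] cinner_operator_scaleC[OF T z2D])
    then show False
      using \<open>z r = 0\<close> z1(2) by (simp add: z_def)
  qed
  define f where "f r = ((1 - r) * r * c + r\<^sup>2) / (norm (z r))\<^sup>2" for r
  have "continuous_on {0..1} f"
    unfolding f_def z_def using z_nonzero[unfolded z_def]
    by (intro continuous_intros) auto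
  moreover have "f 0 = 0" "f 1 = 1"
    using z2(2) \<mu>(1) by (simp_all add: f_def z_def)
  ultimately obtain r where "f r = v"
    using IVT'[of f 0 v 1] v by auto
  define w where "w = scaleC (complex_of_real (1 / norm (z r))) (z r)"
  have "w \<in> M" "norm w = 1"
    using z_in z_nonzero M by (simp_all add: w_def csubspace_scaleC norm_divide)
  moreover have "cinner (T w) w = complex_of_real v"
    using \<open>f r = v\<close> z_in M unfolding w_def
    by (subst cinner_operator_scaleC[OF T]) (auto simp: q_z f_def power2_eq_square)
  ultimately show ?thesis
    unfolding num_range_def by force
qed

lemma convex_num_range:
  assumes T: "linear_operator D T" and M: "csubspace M" "M \<subseteq> D"
  shows "convex (num_range M T)"
proof (rule convexI)
  fix w1 w2 and u v :: real
  assume w: "w1 \<in> num_range M T" "w2 \<in> num_range M T" and uv: "0 \<le> u" "0 \<le> v" "u + v = 1"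
  have u: "complex_of_real u = 1 - complex_of_real v"
    using uv(3) by (simp add: eq_diff_eq flip: of_real_add)
  have "u *\<^sub>R w1 + v *\<^sub>R w2 = w1 + complex_of_real v * (w2 - w1)"
    by (simp add: scaleR_conv_of_real u algebra_simps)
  also have "\<dots> \<in> num_range M T"
  proof (cases "w1 = w2")
    case False
    define S where "S x = scaleC (1 / (w2 - w1)) (T x) + scaleC (- w1 / (w2 - w1)) x" for x
    have S: "linear_operator D S"
      unfolding S_def[abs_def] by (rule linear_operator_affine[OF T])
    have range_S: "num_range M S = (\<lambda>w. (w - w1) / (w2 - w1)) ` num_range M T"
      unfolding S_def[abs_def] num_range_affine by (simp add: diff_divide_distrib)
    have "0 \<in> num_range M S"
      unfolding range_S by (rule image_eqI[OF _ w(1)]) simp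
    then obtain z1 where z1: "z1 \<in> M" "norm z1 = 1" "cinner (S z1) z1 = 0"
      unfolding num_range_def by auto
    have "1 \<in> num_range M S"
      unfolding range_S using False by (intro image_eqI[OF _ w(2)]) simp
    then obtain z2 where z2: "z2 \<in> M" "norm z2 = 1" "cinner (S z2) z2 = 1"
      unfolding num_range_def by auto
    have "complex_of_real v \<in> num_range M S"
      by (rule of_real_unit_interval_in_num_range[OF S M]) (use z1 z2 uv in auto)
    then show ?thesis
      using False unfolding range_S by (auto simp: field_simps)
  qed (use w in simp)
  finally show "u *\<^sub>R w1 + v *\<^sub>R w2 \<in> num_range M T" .
qed

section \<open>Half-plane bounds\<close>

text \<open>For a subspace \<open>M\<close> this says that \<open>W(T|\<^sub>M)\<close> lies in a half-plane
  \<open>{w. Re (\<omega> w) \<ge> -C}\<close>.\<close>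

definition half_plane_bounded :: "'a::complex_inner set \<Rightarrow> ('a \<Rightarrow> 'a) \<Rightarrow> complex \<Rightarrow> bool" where
  "half_plane_bounded M T \<omega> \<longleftrightarrow> (\<exists>C. \<forall>m\<in>M. - C * (norm m)\<^sup>2 \<le> Re (\<omega> * cinner (T m) m))"

lemma half_plane_bounded_subset: "half_plane_bounded M T \<omega> \<Longrightarrow> N \<subseteq> M \<Longrightarrow> half_plane_bounded N T \<omega>"
  unfolding half_plane_bounded_def by blast

lemma half_plane_bounded_nonneg:
  assumes "half_plane_bounded M T \<omega>"
  obtains C where "C \<ge> 0" "\<forall>m\<in>M. - C * (norm m)\<^sup>2 \<le> Re (\<omega> * cinner (T m) m)"
proof -
  obtain C where C: "\<forall>m\<in>M. - C * (norm m)\<^sup>2 \<le> Re (\<omega> * cinner (T m) m)"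
    using assms unfolding half_plane_bounded_def by blast
  have "- max C 0 * (norm m)\<^sup>2 \<le> - C * (norm m)\<^sup>2" for m :: 'a
    by (simp add: mult_right_mono)
  with C show thesis
    using that[of "max C 0"] by (meson max.cobounded2 order_trans)
qed

lemma convex_in_half_plane:
  fixes S :: "complex set"
  assumes "convex S" "S \<noteq> UNIV"
  shows "\<exists>\<omega> c. cmod \<omega> = 1 \<and> (\<forall>w\<in>S. c \<le> Re (\<omega> * w))"
proof (cases "S = {}")
  case False
  obtain l where "l \<notin> S"
    using assms(2) by blast
  then obtain a b where a: "a \<noteq> 0" "\<forall>w\<in>S. b \<le> inner a w"
    using separating_hyperplane_sets[of "{l}" S] assms(1) False by auto
  have "b / cmod a \<le> Re (cnj a / cmod a * w)" if "w \<in> S" for w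
    using a that by (simp add: inner_complex_def divide_right_mono)
  moreover have "cmod (cnj a / cmod a) = 1"
    using a(1) by (simp add: norm_divide)
  ultimately show ?thesis by blast
qed (intro exI[of _ 1], simp)

lemma half_plane_bounded_if_num_range_ne_UNIV:
  assumes T: "linear_operator D T" and M: "csubspace M" "M \<subseteq> D"
    and "num_range M T \<noteq> UNIV"
  shows "\<exists>\<omega>. cmod \<omega> = 1 \<and> half_plane_bounded M T \<omega>"
proof -
  obtain \<omega> c where \<omega>: "cmod \<omega> = 1" and c: "\<forall>w\<in>num_range M T. c \<le> Re (\<omega> * w)"
    using convex_in_half_plane[OF convex_num_range[OF T M] assms(4)] by blast
  have "c * (norm m)\<^sup>2 \<le> Re (\<omega> * cinner (T m) m)" if "m \<in> M" for m
  proof (cases "m = 0")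
    case True
    then show ?thesis using linear_operator_zero[OF T] by simp
  next
    case False
    define k where "k = complex_of_real (1 / norm m)"
    have "scaleC k m \<in> M" "norm (scaleC k m) = 1"
      using that M False by (simp_all add: k_def csubspace_scaleC norm_divide)
    then have "c \<le> Re (\<omega> * cinner (T (scaleC k m)) (scaleC k m))"
      using c unfolding num_range_def by blast
    also have "cinner (T (scaleC k m)) (scaleC k m) = complex_of_real (1 / (norm m)\<^sup>2) * cinner (T m) m"
      using that M by (subst cinner_operator_scaleC[OF T]) (auto simp: k_def power2_eq_square)
    finally show ?thesis
      using False by (simp add: field_simps)
  qed
  then have "half_plane_bounded M T \<omega>"
    unfolding half_plane_bounded_def by (intro exI[of _ "- c"]) simp
  with \<omega> show ?thesis by blast
qed

lemma num_range_UNIV_not_half_plane_bounded: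
  assumes "num_range M T = UNIV" "\<omega> \<noteq> 0"
  shows "\<not> half_plane_bounded M T \<omega>"
proof
  assume "half_plane_bounded M T \<omega>"
  then obtain C where C: "\<forall>m\<in>M. - C * (norm m)\<^sup>2 \<le> Re (\<omega> * cinner (T m) m)"
    unfolding half_plane_bounded_def by blast
  have "- complex_of_real (C + 1) / \<omega> \<in> num_range M T"
    using assms(1) by simp
  then obtain m where m: "m \<in> M" "norm m = 1" "cinner (T m) m = - complex_of_real (C + 1) / \<omega>"
    unfolding num_range_def by auto
  then have "- C \<le> Re (\<omega> * cinner (T m) m)"
    using C by fastforce
  then show False
    using m(3) assms(2) by simp
qed

lemma half_plane_bound_on_line:
  assumes C: "C \<ge> 0" "\<forall>m\<in>{n + scaleC a u |n a. n \<in> N}. - C * (norm m)\<^sup>2 \<le> Re (\<omega> * cinner (T m) m)"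
    and n: "n \<in> N" "cinner n u = 0" and u: "norm u = 1"
    and R: "(norm n)\<^sup>2 + (cmod b)\<^sup>2 \<le> R"
  shows "- (C * R) \<le> Re (\<omega> * cinner (T (n + scaleC b u)) (n + scaleC b u))"
proof -
  have "C * (norm (n + scaleC b u))\<^sup>2 \<le> C * R"
    using R n(2) u C(1) by (simp add: norm_add_scaleC_orthogonal mult_left_mono)
  moreover have "- C * (norm (n + scaleC b u))\<^sup>2 \<le> Re (\<omega> * cinner (T (n + scaleC b u)) (n + scaleC b u))"
    using C(2) n(1) by blast
  ultimately show ?thesis
    by linarith
qed

text \<open>The form on a line, \<open>F(b) = q(n) + cnj b \<langle>Tn,u\<rangle> + b \<langle>Tu,n\<rangle> + |b|\<^sup>2 q(u)\<close>, has one
  term, \<open>\<langle>Tn,u\<rangle>\<close>, that is not controlled by \<open>\<parallel>n\<parallel>\<close>. Evaluating \<open>F\<close> at \<open>2a\<close> and at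
  \<open>2a'\<close> with \<open>\<omega>\<^sub>1 cnj a' = \<omega>\<^sub>2 cnj a\<close> produces it with the coefficient \<open>\<omega>\<^sub>1 + \<omega>\<^sub>2\<close>.\<close>

lemma rotated_line_identity:
  fixes F :: "complex \<Rightarrow> complex"
  assumes F: "\<And>b. F b = Q + cnj b * f + b * h + b * cnj b * R"
    and a': "\<omega>1 * cnj a' = \<omega>2 * cnj a" "a' * cnj a' = a * cnj a"
  shows "(\<omega>1 + \<omega>2) * F a = (\<omega>1 * F (2 * a) + \<omega>1 * F (2 * a')) / 2 + \<omega>2 * Q
    + ((\<omega>2 * a - \<omega>1 * a') * h + (\<omega>2 - 3 * \<omega>1) * (a * cnj a) * R)"
proof -
  have "\<omega>1 * F (2 * a') = \<omega>1 * Q + 2 * (\<omega>1 * cnj a') * f + 2 * \<omega>1 * a' * h + 4 * \<omega>1 * (a' * cnj a') * R"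
    by (simp add: F algebra_simps)
  also have "\<dots> = \<omega>1 * Q + 2 * \<omega>2 * cnj a * f + 2 * \<omega>1 * a' * h + 4 * \<omega>1 * (a * cnj a) * R"
    by (simp add: a')
  finally have F_2a': "\<omega>1 * F (2 * a') = \<dots>" .
  show ?thesis
    unfolding F_2a' by (simp add: F field_simps)
qed

lemma cmod_rotated_line_remainder_le:
  fixes \<omega>1 \<omega>2 a a' h R :: complex
  assumes \<omega>: "cmod \<omega>1 = 1" "cmod \<omega>2 = 1" and a': "cmod a' = cmod a"
    and h: "cmod h \<le> H * r" "0 \<le> H" "0 \<le> r"
  shows "cmod ((\<omega>2 * a - \<omega>1 * a') * h + (\<omega>2 - 3 * \<omega>1) * (a * cnj a) * R)
    \<le> (H + 4 * cmod R) * (r\<^sup>2 + (cmod a)\<^sup>2)"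
proof -
  have "cmod (\<omega>2 * a - \<omega>1 * a') \<le> 2 * cmod a"
    using norm_triangle_ineq4[of "\<omega>2 * a" "\<omega>1 * a'"] \<omega> a' by (simp add: norm_mult)
  then have "cmod ((\<omega>2 * a - \<omega>1 * a') * h) \<le> (2 * cmod a) * (H * r)"
    unfolding norm_mult using h(1) by (rule mult_mono) auto
  also have "\<dots> = H * (2 * cmod a * r)"
    by (simp add: mult_ac)
  also have "\<dots> \<le> H * (r\<^sup>2 + (cmod a)\<^sup>2)"
    using sum_squares_bound[of "cmod a" r] h(2) by (intro mult_left_mono) (auto simp: add.commute)
  finally have first: "cmod ((\<omega>2 * a - \<omega>1 * a') * h) \<le> H * (r\<^sup>2 + (cmod a)\<^sup>2)" .
  have "cmod (\<omega>2 - 3 * \<omega>1) \<le> 4"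
    using norm_triangle_ineq4[of \<omega>2 "3 * \<omega>1"] \<omega> by (simp add: norm_mult)
  moreover have "cmod (a * cnj a) \<le> r\<^sup>2 + (cmod a)\<^sup>2"
    by (simp add: norm_mult power2_eq_square)
  ultimately have "cmod (\<omega>2 - 3 * \<omega>1) * cmod (a * cnj a) \<le> 4 * (r\<^sup>2 + (cmod a)\<^sup>2)"
    by (rule mult_mono) auto
  then have "cmod (\<omega>2 - 3 * \<omega>1) * cmod (a * cnj a) * cmod R \<le> 4 * (r\<^sup>2 + (cmod a)\<^sup>2) * cmod R"
    by (rule mult_right_mono) simp
  then have second: "cmod ((\<omega>2 - 3 * \<omega>1) * (a * cnj a) * R) \<le> 4 * cmod R * (r\<^sup>2 + (cmod a)\<^sup>2)"
    by (simp add: norm_mult mult_ac)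
  show ?thesis
    using norm_triangle_ineq[of "(\<omega>2 * a - \<omega>1 * a') * h" "(\<omega>2 - 3 * \<omega>1) * (a * cnj a) * R"]
      first second by (simp add: distrib_right)
qed

lemma half_plane_bounded_add_line:
  assumes T: "linear_operator D T" and N: "N \<subseteq> D" and u: "u \<in> D" "norm u = 1"
    and orth: "\<forall>n\<in>N. cinner n u = 0"
    and \<omega>: "cmod \<omega>1 = 1" "cmod \<omega>2 = 1"
    and bounded1: "half_plane_bounded {n + scaleC a u |n a. n \<in> N} T \<omega>1"
    and bounded2: "half_plane_bounded N T \<omega>2"
  shows "half_plane_bounded {n + scaleC a u |n a. n \<in> N} T (\<omega>1 + \<omega>2)"
proof -
  obtain C1 where C1: "C1 \<ge> 0" "\<forall>m\<in>{n + scaleC a u |n a. n \<in> N}. - C1 * (norm m)\<^sup>2 \<le> Re (\<omega>1 * cinner (T m) m)"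
    using bounded1 by (rule half_plane_bounded_nonneg)
  obtain C2 where C2: "C2 \<ge> 0" "\<forall>n\<in>N. - C2 * (norm n)\<^sup>2 \<le> Re (\<omega>2 * cinner (T n) n)"
    using bounded2 by (rule half_plane_bounded_nonneg)
  define K where "K = 4 * C1 + C2 + norm (T u) + 4 * cmod (cinner (T u) u)"
  have "- K * (norm (n + scaleC a u))\<^sup>2 \<le> Re ((\<omega>1 + \<omega>2) * cinner (T (n + scaleC a u)) (n + scaleC a u))"
    if n: "n \<in> N" for n a
  proof -
    have nD: "n \<in> D" using n N by auto
    define F where "F b = cinner (T (n + scaleC b u)) (n + scaleC b u)" for b
    define a' where "a' = cnj \<omega>2 * a / cnj \<omega>1"
    define S where "S = (norm n)\<^sup>2 + (cmod a)\<^sup>2"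
    have F: "F b = cinner (T n) n + cnj b * cinner (T n) u + b * cinner (T u) n + b * cnj b * cinner (T u) u" for b
      using cinner_operator_lincomb[OF T nD u(1), of 1 b] by (simp add: F_def)
    have "\<omega>1 * cnj \<omega>1 = 1" "\<omega>2 * cnj \<omega>2 = 1"
      using \<omega> by (simp_all add: complex_norm_square[symmetric])
    moreover have "a' * cnj a' = (\<omega>2 * cnj \<omega>2) * (a * cnj a) / (\<omega>1 * cnj \<omega>1)"
      by (simp add: a'_def mult_ac)
    ultimately have a'_cnj: "a' * cnj a' = a * cnj a"
      by simp
    have \<omega>1_a': "\<omega>1 * cnj a' = \<omega>2 * cnj a"
      using \<omega>(1) by (auto simp: a'_def)
    define rest where "rest = (\<omega>2 * a - \<omega>1 * a') * cinner (T u) n + (\<omega>2 - 3 * \<omega>1) * (a * cnj a) * cinner (T u) u"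
    have "(\<omega>1 + \<omega>2) * F a = (\<omega>1 * F (2 * a) + \<omega>1 * F (2 * a')) / 2 + \<omega>2 * cinner (T n) n + rest"
      unfolding rest_def by (rule rotated_line_identity[OF F \<omega>1_a' a'_cnj])
    then have split: "Re ((\<omega>1 + \<omega>2) * F a) = Re (\<omega>1 * F (2 * a)) / 2 + Re (\<omega>1 * F (2 * a')) / 2
        + Re (\<omega>2 * cinner (T n) n) + Re rest"
      by (simp only: plus_complex.sel Re_divide_numeral add_divide_distrib)
    have "cmod a' = cmod a"
      using \<omega> by (simp add: a'_def norm_mult norm_divide)
    have line: "- (C1 * (4 * S)) \<le> Re (\<omega>1 * F (2 * b))" if "cmod b = cmod a" for b
      unfolding F_def using that orth n zero_le_power2[of "norm n"]
      by (intro half_plane_bound_on_line[OF C1 n _ u(2)]) (auto simp: S_def norm_mult power_mult_distrib)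
    have "C2 * (norm n)\<^sup>2 \<le> C2 * S"
      unfolding S_def using C2(1) by (intro mult_left_mono) auto
    then have center: "- (C2 * S) \<le> Re (\<omega>2 * cinner (T n) n)"
      using C2(2) n by fastforce
    have "cmod rest \<le> (norm (T u) + 4 * cmod (cinner (T u) u)) * S"
      unfolding S_def rest_def using \<omega> \<open>cmod a' = cmod a\<close> cinner_Cauchy_Schwarz[of "T u" n]
      by (intro cmod_rotated_line_remainder_le) auto
    moreover have "K * S = C1 * (4 * S) + C2 * S + (norm (T u) + 4 * cmod (cinner (T u) u)) * S"
      by (simp add: K_def algebra_simps)
    ultimately have "- (K * S) \<le> Re ((\<omega>1 + \<omega>2) * F a)"
      unfolding split using line[OF refl] line[OF \<open>cmod a' = cmod a\<close>] center Re_ge_neg_cmod[of rest]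
      by linarith
    then show ?thesis
      unfolding F_def S_def using orth n u(2) by (simp add: norm_add_scaleC_orthogonal)
  qed
  then show ?thesis
    unfolding half_plane_bounded_def by blast
qed

text \<open>Two lines combined: writing \<open>p = a u\<^sub>1\<close>, \<open>r = b u\<^sub>2\<close>, the identity
  \<open>cinner_operator_three_term\<close> expresses the form at \<open>n + p + r\<close> through its values at
  \<open>n + 2p\<close>, \<open>n + 2r\<close> (controlled by the hypotheses) and at vectors of the plane
  spanned by \<open>u\<^sub>1, u\<^sub>2\<close> (controlled by the four numbers in \<open>Q\<close>).\<close>

lemma half_plane_bound_on_plane:
  assumes T: "linear_operator D T" and N: "N \<subseteq> D" and n: "n \<in> N"
    and u: "u1 \<in> D" "u2 \<in> D" "norm u1 = 1" "norm u2 = 1"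
    and orth: "\<forall>n\<in>N. cinner n u1 = 0 \<and> cinner n u2 = 0"
    and C1: "C1 \<ge> 0" "\<forall>m\<in>{n + scaleC a u1 |n a. n \<in> N}. - C1 * (norm m)\<^sup>2 \<le> Re (\<omega> * cinner (T m) m)"
    and C2: "C2 \<ge> 0" "\<forall>m\<in>{n + scaleC b u2 |n b. n \<in> N}. - C2 * (norm m)\<^sup>2 \<le> Re (\<omega> * cinner (T m) m)"
  defines "Q \<equiv> cmod (cinner (T u1) u1) + cmod (cinner (T u1) u2) + cmod (cinner (T u2) u1)
    + cmod (cinner (T u2) u2)"
  shows "- ((2 * C1 + 2 * C2 + 5 * cmod \<omega> * Q) * ((norm n)\<^sup>2 + (cmod a)\<^sup>2 + (cmod b)\<^sup>2))
    \<le> Re (\<omega> * cinner (T (n + scaleC a u1 + scaleC b u2)) (n + scaleC a u1 + scaleC b u2))"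
proof -
  define p where "p = scaleC a u1"
  define r where "r = scaleC b u2"
  define S where "S = (norm n)\<^sup>2 + (cmod a)\<^sup>2 + (cmod b)\<^sup>2"
  have nD: "n \<in> D" and pD: "p \<in> D" and rD: "r \<in> D"
    using n N u linear_operator_csubspace[OF T] by (auto simp: p_def r_def csubspace_scaleC)
  have plane: "\<bar>Re (\<omega> * cinner (T (scaleC c u1 + scaleC d u2)) (scaleC c u1 + scaleC d u2))\<bar> \<le> cmod \<omega> * Q * S"
    if "(cmod c)\<^sup>2 + (cmod d)\<^sup>2 \<le> (cmod a)\<^sup>2 + (cmod b)\<^sup>2" for c d
  proof -
    let ?q = "cinner (T (scaleC c u1 + scaleC d u2)) (scaleC c u1 + scaleC d u2)"
    have "(cmod c)\<^sup>2 + (cmod d)\<^sup>2 \<le> S"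
      using that zero_le_power2[of "norm n"] unfolding S_def by linarith
    then have "((cmod c)\<^sup>2 + (cmod d)\<^sup>2) * Q \<le> S * Q"
      by (rule mult_right_mono) (simp add: Q_def)
    then have "cmod ?q \<le> S * Q"
      using cmod_cinner_operator_lincomb_le[OF T u(1,2), of c d] unfolding Q_def by linarith
    then have "cmod \<omega> * cmod ?q \<le> cmod \<omega> * (S * Q)"
      by (rule mult_left_mono) simp
    then show ?thesis
      using abs_Re_le_cmod[of "\<omega> * ?q"] by (simp add: norm_mult mult_ac)
  qed
  have line1: "- (C1 * (4 * S)) \<le> Re (\<omega> * cinner (T (n + scaleC 2 p)) (n + scaleC 2 p))"
    unfolding p_def scaleC_scaleC using orth n zero_le_power2[of "norm n"] zero_le_power2[of "cmod b"]
    by (intro half_plane_bound_on_line[OF C1 n _ u(3)]) (auto simp: S_def norm_mult power_mult_distrib)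
  have line2: "- (C2 * (4 * S)) \<le> Re (\<omega> * cinner (T (n + scaleC 2 r)) (n + scaleC 2 r))"
    unfolding r_def scaleC_scaleC using orth n zero_le_power2[of "norm n"] zero_le_power2[of "cmod a"]
    by (intro half_plane_bound_on_line[OF C2 n _ u(4)]) (auto simp: S_def norm_mult power_mult_distrib)
  have "\<omega> * cinner (T (n + p + r)) (n + p + r) = (\<omega> * cinner (T (n + scaleC 2 p)) (n + scaleC 2 p)
      + \<omega> * cinner (T (n + scaleC 2 r)) (n + scaleC 2 r)) / 2
      + \<omega> * cinner (T (p + r)) (p + r) - 2 * (\<omega> * cinner (T p) p) - 2 * (\<omega> * cinner (T r) r)"
    unfolding cinner_operator_three_term[OF T nD pD rD] by (simp add: field_simps)
  moreover have "Re (2 * w) = 2 * Re w" for w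
    by simp
  ultimately have "Re (\<omega> * cinner (T (n + p + r)) (n + p + r)) =
      Re (\<omega> * cinner (T (n + scaleC 2 p)) (n + scaleC 2 p)) / 2 + Re (\<omega> * cinner (T (n + scaleC 2 r)) (n + scaleC 2 r)) / 2
      + Re (\<omega> * cinner (T (p + r)) (p + r)) - 2 * Re (\<omega> * cinner (T p) p) - 2 * Re (\<omega> * cinner (T r) r)"
    by (simp only: plus_complex.sel minus_complex.sel Re_divide_numeral add_divide_distrib)
  moreover have "Re (\<omega> * cinner (T p) p) \<le> cmod \<omega> * Q * S"
    using plane[of a 0] by (simp add: p_def)
  moreover have "Re (\<omega> * cinner (T r) r) \<le> cmod \<omega> * Q * S"
    using plane[of 0 b] by (simp add: r_def)
  moreover have "- (cmod \<omega> * Q * S) \<le> Re (\<omega> * cinner (T (p + r)) (p + r))"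
    using plane[of a b] by (simp add: p_def r_def)
  moreover have K_eq: "(2 * C1 + 2 * C2 + 5 * cmod \<omega> * Q) * S
      = C1 * (4 * S) / 2 + C2 * (4 * S) / 2 + 5 * (cmod \<omega> * Q * S)"
    by (simp add: algebra_simps)
  moreover have z_eq: "n + scaleC a u1 + scaleC b u2 = n + p + r"
    by (simp add: p_def r_def)
  ultimately show ?thesis
    using line1 line2 unfolding S_def[symmetric] K_eq z_eq by linarith
qed

lemma half_plane_bounded_add_plane:
  assumes T: "linear_operator D T" and N: "N \<subseteq> D"
    and u: "u1 \<in> D" "u2 \<in> D" "norm u1 = 1" "norm u2 = 1" "cmod (cinner u1 u2) < 1"
    and orth: "\<forall>n\<in>N. cinner n u1 = 0 \<and> cinner n u2 = 0"
    and bounded1: "half_plane_bounded {n + scaleC a u1 |n a. n \<in> N} T \<omega>"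
    and bounded2: "half_plane_bounded {n + scaleC b u2 |n b. n \<in> N} T \<omega>"
  shows "half_plane_bounded {n + scaleC a u1 + scaleC b u2 |n a b. n \<in> N} T \<omega>"
proof -
  obtain C1 where C1: "C1 \<ge> 0" "\<forall>m\<in>{n + scaleC a u1 |n a. n \<in> N}. - C1 * (norm m)\<^sup>2 \<le> Re (\<omega> * cinner (T m) m)"
    using bounded1 by (rule half_plane_bounded_nonneg)
  obtain C2 where C2: "C2 \<ge> 0" "\<forall>m\<in>{n + scaleC b u2 |n b. n \<in> N}. - C2 * (norm m)\<^sup>2 \<le> Re (\<omega> * cinner (T m) m)"
    using bounded2 by (rule half_plane_bounded_nonneg)
  define K0 where "K0 = 2 * C1 + 2 * C2 + 5 * cmod \<omega> * (cmod (cinner (T u1) u1) + cmod (cinner (T u1) u2)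
    + cmod (cinner (T u2) u1) + cmod (cinner (T u2) u2))"
  define \<gamma> where "\<gamma> = cmod (cinner u1 u2)"
  have "- (K0 / (1 - \<gamma>)) * (norm (n + scaleC a u1 + scaleC b u2))\<^sup>2
      \<le> Re (\<omega> * cinner (T (n + scaleC a u1 + scaleC b u2)) (n + scaleC a u1 + scaleC b u2))"
    if n: "n \<in> N" for n a b
  proof -
    define S where "S = (norm n)\<^sup>2 + (cmod a)\<^sup>2 + (cmod b)\<^sup>2"
    have "0 \<le> K0" "0 < 1 - \<gamma>"
      using C1(1) C2(1) u(5) by (simp_all add: K0_def \<gamma>_def)
    moreover have "(1 - \<gamma>) * S \<le> (norm (n + scaleC a u1 + scaleC b u2))\<^sup>2"
      unfolding \<gamma>_def S_def using orth n by (intro norm_add_lincomb_lower_bound[OF u(3,4)]) auto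
    ultimately have "K0 * S \<le> K0 * ((norm (n + scaleC a u1 + scaleC b u2))\<^sup>2 / (1 - \<gamma>))"
      by (intro mult_left_mono) (simp_all add: pos_le_divide_eq mult.commute)
    then have "K0 * S \<le> K0 / (1 - \<gamma>) * (norm (n + scaleC a u1 + scaleC b u2))\<^sup>2"
      by simp
    moreover have "- (K0 * S) \<le> Re (\<omega> * cinner (T (n + scaleC a u1 + scaleC b u2)) (n + scaleC a u1 + scaleC b u2))"
      unfolding K0_def S_def by (rule half_plane_bound_on_plane[OF T N n u(1-4) orth C1 C2])
    ultimately show ?thesis
      by linarith
  qed
  then show ?thesis
    unfolding half_plane_bounded_def by blast
qed

text \<open>Both complements \<open>(e\<^sub>2 + s\<^sub>i e\<^sub>1)\<^sup>\<perp> \<inter> D\<close> contain \<open>N = {e\<^sub>1, e\<^sub>2}\<^sup>\<perp> \<inter> D\<close>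
  and the line through the unit vector \<open>u\<^sub>i\<close> in the direction \<open>e\<^sub>1 - cnj s\<^sub>i e\<^sub>2\<close>;
  since \<open>s\<^sub>1 \<noteq> s\<^sub>2\<close>, \<open>N + span {u\<^sub>1, u\<^sub>2} = D\<close>.\<close>

lemma half_plane_bounded_complements_sum_eq_0:
  assumes T: "linear_operator D T" and W: "num_range D T = UNIV"
    and e: "e1 \<in> D" "e2 \<in> D" "norm e1 = 1" "norm e2 = 1" "cinner e1 e2 = 0"
    and s: "s1 \<noteq> s2" and \<omega>: "cmod \<omega>1 = 1" "cmod \<omega>2 = 1"
    and bounded1: "half_plane_bounded (orth_in (e2 + scaleC s1 e1) D) T \<omega>1"
    and bounded2: "half_plane_bounded (orth_in (e2 + scaleC s2 e1) D) T \<omega>2"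
  shows "\<omega>1 + \<omega>2 = 0"
proof (rule ccontr)
  assume sum_ne_0: "\<omega>1 + \<omega>2 \<noteq> 0"
  have D: "csubspace D"
    using T by (rule linear_operator_csubspace)
  define N where "N = {n \<in> D. cinner n e1 = 0 \<and> cinner n e2 = 0}"
  define v where "v s = e1 - scaleC (cnj s) e2" for s
  define u where "u s = scaleC (complex_of_real (1 / norm (v s))) (v s)" for s
  have v_pos: "norm (v s) > 0" for s
    using norm_diff_scaleC_orthonormal[OF e(3-5), of "cnj s"] unfolding v_def
    by (metis add_pos_nonneg zero_less_one zero_le_power2 zero_less_norm_iff norm_zero power_zero_numeral)
  have u_D: "u s \<in> D" and norm_u: "norm (u s) = 1" for s
    using D e v_pos[of s] by (simp_all add: u_def v_def csubspace_scaleC csubspace_diff norm_divide)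
  have N_orth_u: "\<forall>n\<in>N. cinner n (u s) = 0" for s
    by (simp add: N_def u_def v_def cinner_simps)
  have N_D: "N \<subseteq> D"
    unfolding N_def by blast
  have N_in_complement: "N \<subseteq> orth_in (e2 + scaleC s e1) D" for s
    by (auto simp: N_def orth_in_def cinner_simps)
  have "cinner e1 e1 = 1" "cinner e2 e2 = 1" "cinner e2 e1 = 0"
    using e cinner_commute[of e2 e1] by (simp_all add: cinner_self_eq_1_iff)
  then have line_in_complement: "{n + scaleC a (u s) |n a. n \<in> N} \<subseteq> orth_in (e2 + scaleC s e1) D" for s
    using D e by (auto simp: N_def orth_in_def u_def v_def csubspace_add csubspace_scaleC csubspace_diff cinner_simps)
  have line_bounded: "half_plane_bounded {n + scaleC a (u s) |n a. n \<in> N} T (\<omega> + \<omega>')"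
    if "cmod \<omega> = 1" "cmod \<omega>' = 1"
      "half_plane_bounded (orth_in (e2 + scaleC s e1) D) T \<omega>"
      "half_plane_bounded (orth_in (e2 + scaleC s' e1) D) T \<omega>'" for s s' \<omega> \<omega>'
    by (rule half_plane_bounded_add_line[OF T N_D u_D norm_u N_orth_u that(1,2)
          half_plane_bounded_subset[OF that(3) line_in_complement]
          half_plane_bounded_subset[OF that(4) N_in_complement]])
  have u_close: "cmod (cinner (u s1) (u s2)) < 1"
    using cmod_cinner_skew_pair_less[OF e(3-5) s] v_pos[of s1] v_pos[of s2]
    by (simp add: u_def v_def cinner_scaleC_left cinner_scaleC_right norm_mult norm_divide field_simps)
  have rescale: "scaleC (\<alpha> * complex_of_real (norm (v s))) (u s) = scaleC \<alpha> (v s)" for \<alpha> s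
    using v_pos[of s] by (simp add: u_def scaleC_scaleC)
  have D_plane: "D \<subseteq> {n + scaleC a (u s1) + scaleC b (u s2) |n a b. n \<in> N}"
  proof
    fix z assume "z \<in> D"
    then obtain n a b where "n \<in> D" "cinner n e1 = 0" "cinner n e2 = 0"
      "z = n + scaleC a (v s1) + scaleC b (v s2)"
      unfolding v_def by (rule decompose_orthonormal_skew_pair[OF D _ e s])
    then show "z \<in> {n + scaleC a (u s1) + scaleC b (u s2) |n a b. n \<in> N}"
      unfolding N_def rescale[symmetric] by blast
  qed
  have "half_plane_bounded {n + scaleC a (u s2) |n a. n \<in> N} T (\<omega>1 + \<omega>2)"
    using line_bounded[OF \<omega>(2,1) bounded2 bounded1] by (simp add: add.commute)
  then have "half_plane_bounded {n + scaleC a (u s1) + scaleC b (u s2) |n a b. n \<in> N} T (\<omega>1 + \<omega>2)"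
    using N_orth_u
    by (intro half_plane_bounded_add_plane[OF T N_D u_D u_D norm_u norm_u u_close
          _ line_bounded[OF \<omega> bounded1 bounded2]]) auto
  then have "half_plane_bounded D T (\<omega>1 + \<omega>2)"
    using D_plane by (rule half_plane_bounded_subset)
  then show False
    using num_range_UNIV_not_half_plane_bounded[OF W sum_ne_0] by blast
qed

section \<open>Exceptional complements\<close>

lemma finite_card_le_2_if_no_three_distinct:
  assumes "\<And>a b c. a \<in> E \<Longrightarrow> b \<in> E \<Longrightarrow> c \<in> E \<Longrightarrow> a \<noteq> b \<Longrightarrow> a \<noteq> c \<Longrightarrow> b \<noteq> c \<Longrightarrow> False"
  shows "finite E \<and> card E \<le> 2"
proof (rule ccontr)
  assume not_le_2: "\<not> (finite E \<and> card E \<le> 2)"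
  obtain B where "B \<subseteq> E" "card B = 3"
  proof (cases "finite E")
    case True
    then show thesis
      using not_le_2 obtain_subset_with_card_n[of 3 E] that by force
  next
    case False
    then show thesis
      using infinite_arbitrarily_large[of E 3] that by blast
  qed
  then show False
    using assms by (auto simp: card_3_iff)
qed

lemma eq_0_if_pairwise_sums_eq_0:
  fixes a b c :: "'a::field_char_0"
  assumes "a + b = 0" "a + c = 0" "b + c = 0"
  shows "a = 0"
proof -
  have "2 * a = (a + b) + (a + c) - (b + c)"
    by (simp add: algebra_simps)
  then show ?thesis
    using assms by simp
qed

lemma num_range_complements_ne_UNIV_card_le_2:
  assumes T: "linear_operator D T" and W: "num_range D T = UNIV"
    and x: "x \<in> D" "norm x = 1" and y: "y \<in> D" and indep: "clin_indep2 x y"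
  shows "finite {t. num_range (orth_in (y + scaleC t x) D) T \<noteq> UNIV}
    \<and> card {t. num_range (orth_in (y + scaleC t x) D) T \<noteq> UNIV} \<le> 2"
proof -
  have D: "csubspace D"
    using T by (rule linear_operator_csubspace)
  obtain e s where e: "e \<in> D" "norm e = 1" "cinner x e = 0" and "inj s"
    and complement: "\<And>t. orth_in (y + scaleC t x) D = orth_in (e + scaleC (s t) x) D"
    using orth_in_line_reparametrize[OF D x y indep] by blast
  define E where "E = {t. num_range (orth_in (y + scaleC t x) D) T \<noteq> UNIV}"
  have bounded: "\<exists>\<omega>. cmod \<omega> = 1 \<and> half_plane_bounded (orth_in (e + scaleC (s t) x) D) T \<omega>"
    if "t \<in> E" for t
    using that unfolding E_def complement
    by (intro half_plane_bounded_if_num_range_ne_UNIV[OF T csubspace_orth_in[OF D] orth_in_subset]) simp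
  have opposite: "\<omega> + \<omega>' = 0"
    if "t \<noteq> t'"
      "cmod \<omega> = 1" "half_plane_bounded (orth_in (e + scaleC (s t) x) D) T \<omega>"
      "cmod \<omega>' = 1" "half_plane_bounded (orth_in (e + scaleC (s t') x) D) T \<omega>'" for t t' \<omega> \<omega>'
    using that(1) \<open>inj s\<close>
    by (intro half_plane_bounded_complements_sum_eq_0[OF T W x(1) e(1) x(2) e(2,3) _ that(2,4,3,5)])
      (auto dest: injD)
  have "finite E \<and> card E \<le> 2"
  proof (rule finite_card_le_2_if_no_three_distinct)
    fix t1 t2 t3 assume t: "t1 \<in> E" "t2 \<in> E" "t3 \<in> E" "t1 \<noteq> t2" "t1 \<noteq> t3" "t2 \<noteq> t3"
    obtain \<omega>1 \<omega>2 \<omega>3 where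
      \<omega>1: "cmod \<omega>1 = 1" "half_plane_bounded (orth_in (e + scaleC (s t1) x) D) T \<omega>1" and
      \<omega>2: "cmod \<omega>2 = 1" "half_plane_bounded (orth_in (e + scaleC (s t2) x) D) T \<omega>2" and
      \<omega>3: "cmod \<omega>3 = 1" "half_plane_bounded (orth_in (e + scaleC (s t3) x) D) T \<omega>3"
      using bounded[OF t(1)] bounded[OF t(2)] bounded[OF t(3)] by blast
    have "\<omega>1 = 0"
      by (rule eq_0_if_pairwise_sums_eq_0[OF opposite[OF t(4) \<omega>1 \<omega>2]
            opposite[OF t(5) \<omega>1 \<omega>3] opposite[OF t(6) \<omega>2 \<omega>3]])
    then show False
      using \<omega>1(1) by simp
  qed
  then show ?thesis
    unfolding E_def .
qed

lemma num_range_complement_UNIV_near: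
  assumes T: "linear_operator D T" and W: "num_range D T = UNIV"
    and y: "y \<in> D" "norm y = 1" and nontrivial: "orth_in y D \<noteq> {0}" and \<epsilon>: "\<epsilon> > 0"
  shows "\<exists>w. w \<in> D \<and> norm w = 1 \<and> num_range (orth_in w D) T = UNIV \<and>
    cmod (cinner (T w) w - cinner (T y) y) < \<epsilon>"
proof -
  obtain x0 where x0: "x0 \<in> orth_in y D" "x0 \<noteq> 0"
    using nontrivial csubspace_zero[OF linear_operator_csubspace[OF T]] by (auto simp: orth_in_def)
  define x where "x = scaleC (complex_of_real (1 / norm x0)) x0"
  have x: "x \<in> D" "norm x = 1" "cinner x y = 0"
    using x0 normalize_in_domain[OF T, of x0] by (auto simp: x_def orth_in_def cinner_scaleC_left)
  then have "clin_indep2 x y"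
    using y by (intro clin_indep2_orthogonal) auto
  define E where "E = {t. num_range (orth_in (y + scaleC t x) D) T \<noteq> UNIV}"
  have "finite E"
    using num_range_complements_ne_UNIV_card_le_2[OF T W x(1,2) y(1) \<open>clin_indep2 x y\<close>]
    unfolding E_def by blast
  define f where "f t = (cinner (T y) y + complex_of_real t * (cinner (T y) x + cinner (T x) y)
    + complex_of_real (t\<^sup>2) * cinner (T x) x) / complex_of_real (1 + t\<^sup>2)" for t
  have "(f \<longlongrightarrow> cinner (T y) y) (at_right 0)"
    unfolding f_def by (auto intro!: tendsto_eq_intros)
  then have "\<forall>\<^sub>F t in at_right 0. cmod (f t - cinner (T y) y) < \<epsilon>"
    using \<epsilon> by (auto simp: tendsto_iff dist_norm)
  then obtain b where b: "b > 0" "\<And>t. 0 < t \<Longrightarrow> t < b \<Longrightarrow> cmod (f t - cinner (T y) y) < \<epsilon>"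
    unfolding eventually_at_right_field by blast
  have "infinite (complex_of_real ` {0<..<b})"
    using infinite_Ioo[OF b(1)] by (simp add: finite_image_iff inj_on_def)
  then have "\<not> complex_of_real ` {0<..<b} \<subseteq> E"
    using \<open>finite E\<close> finite_subset by blast
  then obtain t where t: "0 < t" "t < b" "num_range (orth_in (y + scaleC (complex_of_real t) x) D) T = UNIV"
    unfolding E_def by auto
  define v where "v = y + scaleC (complex_of_real t) x"
  have vD: "v \<in> D"
    using linear_operator_csubspace[OF T] x y by (simp add: v_def csubspace_add csubspace_scaleC)
  have norm_v: "(norm v)\<^sup>2 = 1 + t\<^sup>2"
    using norm_add_scaleC_orthogonal[OF _ x(2), of y "complex_of_real t"] x(3) y(2) cinner_commute[of y x]
    by (simp add: v_def)
  then have "v \<noteq> 0"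
    by (metis add_pos_nonneg zero_less_one zero_le_power2 norm_zero power_zero_numeral less_irrefl)
  have "cinner (T v) v = cinner (T y) y + complex_of_real t * (cinner (T y) x + cinner (T x) y)
      + complex_of_real (t\<^sup>2) * cinner (T x) x"
    using cinner_operator_lincomb[OF T y(1) x(1), of 1 "complex_of_real t"]
    by (simp add: v_def algebra_simps power2_eq_square)
  then have "cinner (T v) v / complex_of_real ((norm v)\<^sup>2) = f t"
    unfolding norm_v f_def by simp
  then show ?thesis
    using normalize_in_domain[OF T vD \<open>v \<noteq> 0\<close>] t b(2)[OF t(1,2)] unfolding v_def
    by (intro exI[of _ "scaleC (complex_of_real (1 / norm v)) v"]) (auto simp: v_def)
qed

theorem lemma2p7:
  fixes D :: "'h::chilbert_space set" and T :: "'h \<Rightarrow> 'h"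
  assumes "separable_space TYPE('h)"
    and "infinite_dimensional TYPE('h)"
    and "linear_operator D T"
    and "num_range D T = UNIV"
  shows "(\<forall>x y. x \<in> D \<longrightarrow> y \<in> D \<longrightarrow> norm x = 1 \<longrightarrow> norm y = 1 \<longrightarrow> clin_indep2 x y \<longrightarrow>
            (let E = {t. num_range (orth_in (y + scaleC t x) D) T \<noteq> UNIV}
             in finite E \<and> card E \<le> 3))
       \<and> (\<forall>y. y \<in> D \<longrightarrow> norm y = 1 \<longrightarrow> orth_in y D \<noteq> {0} \<longrightarrow>
            (\<forall>\<epsilon>>0. \<exists>w. w \<in> D \<and> norm w = 1 \<and> num_range (orth_in w D) T = UNIV \<and>
                 cmod (cinner (T w) w - cinner (T y) y) < \<epsilon>))"
proof (intro conjI allI impI)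
  fix x y
  assume "x \<in> D" "y \<in> D" "norm x = 1" "norm y = 1" "clin_indep2 x y"
  then show "let E = {t. num_range (orth_in (y + scaleC t x) D) T \<noteq> UNIV} in finite E \<and> card E \<le> 3"
    using num_range_complements_ne_UNIV_card_le_2[OF assms(3,4), of x y] by (auto simp: Let_def)
next
  fix y :: 'h and \<epsilon> :: real
  assume "y \<in> D" "norm y = 1" "orth_in y D \<noteq> {0}" "\<epsilon> > 0"
  then show "\<exists>w. w \<in> D \<and> norm w = 1 \<and> num_range (orth_in w D) T = UNIV \<and>
      cmod (cinner (T w) w - cinner (T y) y) < \<epsilon>"
    by (rule num_range_complement_UNIV_near[OF assms(3,4)])
qed

end
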